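(* Let $\lambda\in\mathbb{C}$ be a generic parameter and consider the six equations on the eight vertex values $(u_0,u_1,u_2,u_{12},v_0,v_1,v_2,v_{12})$ of a cube: \[ \mathcal A:\ u_{12}-u_0-\frac{1}{u_2}+\frac{1}{u_1}=0,\qquad \mathcal S:\ u_0-v_{12}-\frac{1}{u_1}+\frac{\lambda}{v_2}=0, \] \[ \mathcal B:\ (u_0-v_0)\Big(\frac1{u_0}+v_2\Big)-1+\lambda=0,\qquad \mathcal B':\ (u_1-v_1)\Big(\frac1{u_1}+v_{12}\Big)-1+\lambda=0, \] \[ \mathcal C:\ \frac1{u_0}-\frac{\lambda}{v_0}-u_1+v_1=0,\qquad \mathcal C':\ \frac1{u_2}-\frac{\lambda}{v_2}-u_{12}+v_{12}=0. \] For generic initial values $u_0,u_1,u_2,v_0\in\mathbb{C}$, solve $\mathcal A=0$ for $u_{12}$, $\mathcal B=0$ for $v_2$ and $\mathcal C=0$ for $v_1$ (each as a rational function of the initial values). Then the three expressions for $v_{12}$ obtained by solving $\mathcal S=0$, $\mathcal B'=0$ and $\mathcal C'=0$ respectively coincide as rational functions of $u_0,u_1,u_2,v_0$ (i.e. the system is consistent around a broken cube). Moreover, with these values the following tetrahedron equations hold identically: \[ \mathcal K_1:\ \Big(v_{12}+\frac1{u_1}\Big)\Big(\frac1{u_0}-\frac{\lambda}{v_0}\Big)-1+\lambda=0,\qquad \mathcal K_2:\ \Big(\frac{\lambda}{v_2}+u_0\Big)(u_1-v_1)-1+\lambda=0. \]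
   Context: Hirota's discrete KdV (dKdV) equation is the partial difference equation $u_{l+1,m+1}-u_{l,m}=\frac{1}{u_{l,m+1}}-\frac{1}{u_{l+1,m}}$ for $u:\mathbb{Z}^2\to\mathbb{C}$. In the cube picture, $u_0=u_{l,m}$, $u_1=u_{l+1,m}$, $u_2=u_{l,m+1}$, $u_{12}=u_{l+1,m+1}$ and $v_0,v_1,v_2,v_{12}$ are the corresponding values of an auxiliary function $v$ on the parallel face; $\mathcal A$ is the dKdV equation. Generic means all denominators appearing are nonzero. *)

theory Defs
  imports Complex_Main
begin

end

theory Submission
  imports Defs
begin

text \<open>Solving \<open>\<B>\<close> gives \<open>u\<^sub>0 v\<^sub>2 (u\<^sub>0 - v\<^sub>0) = v\<^sub>0 - \<lambda> u\<^sub>0\<close>, while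
  \<open>\<C>\<close> gives \<open>u\<^sub>1 - v\<^sub>1 = (v\<^sub>0 - \<lambda> u\<^sub>0) / (u\<^sub>0 v\<^sub>0)\<close>; with these the tetrahedron
  equation \<open>\<K>\<^sub>2\<close> is a rational identity. Every remaining equation is affine in \<open>v\<^sub>12\<close>:
  \<open>\<S>\<close> and \<open>\<C>'\<close> (using \<open>\<A>\<close>) both read \<open>v\<^sub>12 = u\<^sub>0 - 1/u\<^sub>1 + \<lambda>/v\<^sub>2\<close>, and by \<open>\<K>\<^sub>2\<close>
  the equation \<open>\<B>'\<close> is \<open>(u\<^sub>1 - v\<^sub>1)\<close> times the same equation. \<open>\<K>\<^sub>1\<close> is then \<open>\<K>\<^sub>2\<close> rewritten
  through \<open>\<S>\<close> and \<open>\<C>\<close>.\<close>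

lemma dKdV_tetrahedron_K2:
  fixes lam u0 u1 v0 v1 v2 :: "'a :: field"
  assumes "u0 \<noteq> 0" "v0 \<noteq> 0" "v2 \<noteq> 0"
    and B: "(u0 - v0) * (1 / u0 + v2) - 1 + lam = 0"
    and C: "1 / u0 - lam / v0 - u1 + v1 = 0"
  shows "(lam / v2 + u0) * (u1 - v1) = 1 - lam"
proof -
  have v1: "u1 - v1 = 1 / u0 - lam / v0"
    using C by (simp add: algebra_simps)
  have v2: "u0 * v2 * (u0 - v0) = v0 - lam * u0"
    using B \<open>u0 \<noteq> 0\<close> by (simp add: field_simps)
  have "(lam / v2 + u0) * (1 / u0 - lam / v0) * (u0 * v0 * v2)
          = (lam + u0 * v2) * (v0 - lam * u0)"
    using assms(1-3) by (simp add: field_simps)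
  also have "\<dots> = (1 - lam) * (u0 * v0 * v2) + lam * (v0 - lam * u0 - u0 * v2 * (u0 - v0))"
    by (simp add: algebra_simps)
  also have "\<dots> = (1 - lam) * (u0 * v0 * v2)"
    by (simp add: v2)
  finally show ?thesis
    unfolding v1 using assms(1-3) by simp
qed

theorem mainTheorem1:
  fixes lam u0 u1 u2 u12 v0 v1 v2 :: complex
  assumes gen: "u0 \<noteq> 0" "u1 \<noteq> 0" "u2 \<noteq> 0" "v0 \<noteq> 0" "u0 \<noteq> v0"
      "v2 \<noteq> 0" "u1 \<noteq> v1"
    and A: "u12 - u0 - 1 / u2 + 1 / u1 = 0"
    and B: "(u0 - v0) * (1 / u0 + v2) - 1 + lam = 0"
    and C: "1 / u0 - lam / v0 - u1 + v1 = 0"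
  shows "\<exists>w. (\<forall>v12. u0 - v12 - 1 / u1 + lam / v2 = 0 \<longleftrightarrow> v12 = w)
           \<and> (\<forall>v12. (u1 - v1) * (1 / u1 + v12) - 1 + lam = 0 \<longleftrightarrow> v12 = w)
           \<and> (\<forall>v12. 1 / u2 - lam / v2 - u12 + v12 = 0 \<longleftrightarrow> v12 = w)
           \<and> (w + 1 / u1) * (1 / u0 - lam / v0) - 1 + lam = 0
           \<and> (lam / v2 + u0) * (u1 - v1) - 1 + lam = 0"
proof -
  define w where "w = u0 - 1 / u1 + lam / v2"
  have K2: "(lam / v2 + u0) * (u1 - v1) = 1 - lam"
    using dKdV_tetrahedron_K2 gen(1,4,6) B C by blast
  have u12: "u12 = u0 + 1 / u2 - 1 / u1"
    using A by (simp add: algebra_simps)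
  have S: "u0 - v12 - 1 / u1 + lam / v2 = 0 \<longleftrightarrow> v12 = w" for v12
    unfolding w_def by (auto simp: algebra_simps)
  have B': "(u1 - v1) * (1 / u1 + v12) - 1 + lam = 0 \<longleftrightarrow> v12 = w" for v12
  proof -
    have "(u1 - v1) * (1 / u1 + v12) - 1 + lam = (u1 - v1) * (v12 - w)"
      using K2 unfolding w_def by (simp add: algebra_simps)
    then show ?thesis
      using gen(7) by simp
  qed
  have C': "1 / u2 - lam / v2 - u12 + v12 = 0 \<longleftrightarrow> v12 = w" for v12
    unfolding u12 w_def by (auto simp: algebra_simps)
  have K1: "(w + 1 / u1) * (1 / u0 - lam / v0) - 1 + lam = 0"
  proof -
    have "w + 1 / u1 = lam / v2 + u0" and "1 / u0 - lam / v0 = u1 - v1"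
      using C unfolding w_def by (simp_all add: algebra_simps)
    then show ?thesis
      using K2 by simp
  qed
  show ?thesis
    using S B' C' K1 K2 by auto
qed

end
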